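(* Let $k$ be a square-free positive integer and $d$ a positive integer. Then $$e^*_k(d^2)=k^2\sum_{m\mid k}\mu(m)\Bigl(\prod_{p\mid m,\ p\text{ prime}}\frac{p^2-1}{p^2+1}\Bigr)e^*_1(d_m^2),$$ where $d_m=\max\{x\mid d:\gcd(x,m)=1\}=d/\prod_{p\mid m}p^{\nu_p(d)}$.
   Context: $\nu_p$ is the $p$-adic valuation and $\mu$ the Möbius function. For a positive integer $d$, define $\gamma_c(d^2)$ for $c\ge1$ as the multiplicative function of $c$ (i.e. $\gamma_{c}(d^2)=\prod_{p^r\| c}\gamma_{p^r}(d^2)$, $\gamma_1=1$) with: for $p=2$, $\gamma_{2^r}(d^2)=2^{r/2}$ if $r\ge2$ is even and $\nu_2(d^2)=r-2$; $=2^{(r-1)/2}$ if $r$ is odd and $\nu_2(d^2)\ge r-1$; $=0$ otherwise. For $p$ odd, $\gamma_{p^r}(d^2)=p^{r/2-1}(p-1)$ if $r\ge2$ is even and $\nu_p(d^2)\ge r$; $=p^{(r-1)/2}$ if $r$ is odd and $\nu_p(d^2)=r-1$; $=0$ otherwise. For a positive integer $k$, $e^*_k(d^2)=\sum_{c=1}^\infty\frac{\gcd(c,2k)^2}{c^2}\gamma_c(d^2)$ (absolutely convergent). *)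

theory Defs
  imports "HOL-Analysis.Analysis" "HOL-Computational_Algebra.Squarefree"
begin

definition moebius :: "nat \<Rightarrow> int" where
  "moebius m = (if squarefree m then (-1) ^ card (prime_factors m) else 0)"

text \<open>Local factor gamma_{p^r}(n), where n plays the role of d^2.\<close>
definition gamma_pp :: "nat \<Rightarrow> nat \<Rightarrow> nat \<Rightarrow> real" where
  "gamma_pp p r n =
    (if p = 2 then
       (if r \<ge> 2 \<and> even r \<and> multiplicity 2 n = r - 2 then 2 ^ (r div 2)
        else if odd r \<and> multiplicity 2 n \<ge> r - 1 then 2 ^ ((r - 1) div 2)
        else 0)
     else
       (if r \<ge> 2 \<and> even r \<and> multiplicity p n \<ge> r then real p ^ (r div 2 - 1) * (real p - 1)
        else if odd r \<and> multiplicity p n = r - 1 then real p ^ ((r - 1) div 2)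
        else 0))"

definition gamma :: "nat \<Rightarrow> nat \<Rightarrow> real" where
  "gamma c n = (\<Prod>p\<in>prime_factors c. gamma_pp p (multiplicity p c) n)"

definition estar :: "nat \<Rightarrow> nat \<Rightarrow> real" where
  "estar k n = (\<Sum>c. (real (gcd (Suc c) (2 * k)))\<^sup>2 / (real (Suc c))\<^sup>2 * gamma (Suc c) n)"

definition dpart :: "nat \<Rightarrow> nat \<Rightarrow> nat" where
  "dpart d m = d div (\<Prod>p\<in>prime_factors m. p ^ multiplicity p d)"

end

theory Submission
  imports Defs
begin

text \<open>
  Induction over the prime factors of k. For a prime p not dividing k, sort the terms of
  the series e*_k by nu_p(c). Since gcd(c, 2pk) = p gcd(c, 2k) exactly when nu_p(c) > nu_p(2k),
  e*_{pk}(n) is p^2 e*_k(n) minus (p^2 - 1) times the terms with nu_p(c) <= nu_p(2k).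
  For n' = (d_p)^2, which is prime to p, only the terms with nu_p(c) <= nu_p(2k) + 1 survive,
  and substituting c = p^r c' turns every nu_p-part, for n as well as for n', into an
  explicit multiple of the part with nu_p(c) = 0. Comparing the two expressions gives
  e*_{pk}(n) = p^2 e*_k(n) - p^2 (p^2 - 1)/(p^2 + 1) e*_k(n'), for p = 2 and for odd p alike.
  The divisor sum obeys the same recursion because mu(pm) = -mu(m) and (d_p)_m = d_{pm}.
\<close>

lemma gcd_prime_mult:
  fixes c m p :: nat
  assumes p: "prime p" and c: "c \<noteq> 0" and m: "m \<noteq> 0"
  shows "gcd c (p * m) = (if multiplicity p m < multiplicity p c then p else 1) * gcd c m"
proof (rule multiplicity_eq_nat)
  fix q :: nat assume q: "prime q"
  show "multiplicity q (gcd c (p * m)) =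
      multiplicity q ((if multiplicity p m < multiplicity p c then p else 1) * gcd c m)"
    using c m p q
    by (cases "q = p")
       (auto simp: multiplicity_gcd prime_elem_multiplicity_mult_distrib prime_multiplicity_other)
qed (use c m p in \<open>auto simp: prime_gt_0_nat\<close>)

lemma multiplicity_prime_double:
  fixes p k :: nat
  assumes "prime p" "\<not> p dvd k"
  shows "multiplicity p (2 * k) = (if p = 2 then 1 else 0)"
proof -
  have "k \<noteq> 0" using assms(2) by (metis dvd_0_right)
  then show ?thesis
    using assms by (auto simp: prime_elem_multiplicity_mult_distrib prime_multiplicity_other
        not_dvd_imp_multiplicity_0)
qed

lemma gcd_prime_power_mult:
  fixes c k p r :: nat
  assumes p: "prime p" and c: "\<not> p dvd c" and k: "\<not> p dvd k" and r: "r \<ge> 1"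
  shows "gcd (p ^ r * c) (2 * k) = (if p = 2 then 2 else 1) * gcd c (2 * k)"
proof (rule multiplicity_eq_nat)
  have nz: "c \<noteq> 0" "k \<noteq> 0" "p \<noteq> 0" using c k p by (auto intro!: gr0I)
  fix q :: nat assume q: "prime q"
  show "multiplicity q (gcd (p ^ r * c) (2 * k)) =
      multiplicity q ((if p = 2 then 2 else 1) * gcd c (2 * k))"
  proof (cases "q = p")
    case True
    then show ?thesis
      using nz p r c multiplicity_prime_double[OF p k]
      by (auto simp: multiplicity_gcd prime_elem_multiplicity_mult_distrib
          not_dvd_imp_multiplicity_0 prime_elem_multiplicity_power_distrib)
  next
    case False
    then show ?thesis
      using nz p q
      by (auto simp: multiplicity_gcd prime_elem_multiplicity_mult_distrib prime_multiplicity_other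
          prime_elem_multiplicity_power_distrib)
  qed
qed (use c k p in \<open>auto intro!: gr0I simp: prime_gt_0_nat\<close>)

lemma gamma_pp_nonneg: "p > 0 \<Longrightarrow> gamma_pp p r n \<ge> 0"
  unfolding gamma_pp_def by auto

lemma gamma_pp_square_le:
  assumes "p \<ge> 2"
  shows "(gamma_pp p r n)\<^sup>2 \<le> real p ^ r"
proof -
  have p1: "real p \<ge> 1" using assms by simp
  have even_bound: "real p ^ (r div 2 - 1) * (real p - 1) \<le> real p ^ (r div 2)" if "r \<ge> 2"
  proof -
    have "real p ^ (r div 2 - 1) * (real p - 1) \<le> real p ^ (r div 2 - 1) * real p"
      using p1 by (intro mult_left_mono) auto
    also have "\<dots> = real p ^ (r div 2)"
      using that by (metis Suc_diff_1 div_greater_zero_iff power_Suc2 zero_less_numeral)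
    finally show ?thesis .
  qed
  have "gamma_pp p r n \<le> real p ^ (r div 2)"
    using even_bound p1 power_increasing[of "(r - 1) div 2" "r div 2" "real p"]
    unfolding gamma_pp_def by auto
  then have "(gamma_pp p r n)\<^sup>2 \<le> (real p ^ (r div 2))\<^sup>2"
    using assms by (intro power_mono gamma_pp_nonneg) auto
  also have "\<dots> = real p ^ (2 * (r div 2))"
    by (simp add: power_mult [symmetric] mult.commute)
  also have "\<dots> \<le> real p ^ r"
    using p1 by (intro power_increasing) auto
  finally show ?thesis .
qed

lemma gamma_nonneg: "gamma c n \<ge> 0"
  unfolding gamma_def
  by (intro prod_nonneg) (auto intro: gamma_pp_nonneg simp: prime_gt_0_nat in_prime_factors_iff)

lemma gamma_le_sqrt:
  assumes "c > 0"
  shows "gamma c n \<le> sqrt (real c)"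
proof (rule real_le_rsqrt)
  have "(gamma c n)\<^sup>2 = (\<Prod>p\<in>prime_factors c. (gamma_pp p (multiplicity p c) n)\<^sup>2)"
    unfolding gamma_def by (rule prod_power_distrib)
  also have "\<dots> \<le> (\<Prod>p\<in>prime_factors c. real p ^ multiplicity p c)"
    by (intro prod_mono conjI gamma_pp_square_le zero_le_power2)
       (auto simp: in_prime_factors_iff prime_ge_2_nat)
  also have "\<dots> = real (\<Prod>p\<in>prime_factors c. p ^ multiplicity p c)"
    by simp
  also have "\<dots> = real c"
    by (simp only: prime_factorization_nat[OF assms, symmetric])
  finally show "(gamma c n)\<^sup>2 \<le> real c" .
qed

lemma gamma_cong:
  assumes "\<And>q. q \<in> prime_factors c \<Longrightarrow> multiplicity q n = multiplicity q n'"
  shows "gamma c n = gamma c n'"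
  unfolding gamma_def gamma_pp_def using assms by (intro prod.cong) auto

lemma gamma_eq_0:
  assumes "prime p" "multiplicity p c \<noteq> 0" "gamma_pp p (multiplicity p c) n = 0"
  shows "gamma c n = 0"
proof -
  have "p \<in> prime_factors c"
    using assms by (auto simp: prime_factors_multiplicity)
  then show ?thesis unfolding gamma_def using assms(3) by (intro prod_zero) auto
qed

lemma gamma_prime_power_mult:
  fixes p c r :: nat
  assumes p: "prime p" and c: "\<not> p dvd c" and r: "r \<ge> 1"
  shows "gamma (p ^ r * c) n = gamma_pp p r n * gamma c n"
proof -
  have nz: "p ^ r \<noteq> 0" "c \<noteq> 0" using p c by (auto simp: prime_gt_0_nat intro!: gr0I)
  have pf: "prime_factors (p ^ r * c) = insert p (prime_factors c)"
    using p r nz by (simp add: prime_factors_product prime_factorization_prime_power)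
  have p_notin: "p \<notin> prime_factors c" using c by (auto simp: in_prime_factors_iff)
  have mult_p: "multiplicity p (p ^ r * c) = r"
    using p nz c
    by (simp add: prime_elem_multiplicity_mult_distrib multiplicity_same_power not_dvd_imp_multiplicity_0)
  have mult_q: "multiplicity q (p ^ r * c) = multiplicity q c" if "q \<in> prime_factors c" for q
  proof -
    have "prime q" "q \<noteq> p" using that p_notin by auto
    then show ?thesis
      using p nz by (simp add: prime_elem_multiplicity_mult_distrib prime_elem_multiplicity_power_distrib
          prime_multiplicity_other)
  qed
  show ?thesis
    unfolding gamma_def pf using p_notin by (simp add: mult_p mult_q cong: prod.cong)
qed

lemma gamma_pp_multiplicity_0:
  assumes "multiplicity p n = 0"
  shows "gamma_pp p r n = (if r = 1 then 1 else if p = 2 \<and> r = 2 then 2 else 0)"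
  using assms unfolding gamma_pp_def by (auto elim!: oddE)

text \<open>Unlike in \<open>estar\<close>, terms are indexed by c itself; the term for c = 0 vanishes.\<close>

definition estar_term :: "nat \<Rightarrow> nat \<Rightarrow> nat \<Rightarrow> real" where
  "estar_term k n c = (real (gcd c (2 * k)))\<^sup>2 / (real c)\<^sup>2 * gamma c n"

lemma estar_term_0 [simp]: "estar_term k n 0 = 0"
  by (simp add: estar_term_def)

lemma estar_term_nonneg: "estar_term k n c \<ge> 0"
  unfolding estar_term_def by (intro mult_nonneg_nonneg divide_nonneg_nonneg gamma_nonneg) auto

lemma estar_term_le:
  assumes "k > 0"
  shows "estar_term k n c \<le> (2 * real k)\<^sup>2 * real c powr (-3/2)"
proof (cases "c = 0")
  case False
  have "real (gcd c (2 * k)) \<le> real (2 * k)"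
    using assms by (simp only: of_nat_le_iff) (intro gcd_le2_nat, simp)
  then have "estar_term k n c \<le> (2 * real k)\<^sup>2 / (real c)\<^sup>2 * sqrt (real c)"
    unfolding estar_term_def using False
    by (intro mult_mono divide_right_mono power_mono gamma_le_sqrt) (auto simp: gamma_nonneg)
  also have "\<dots> = (2 * real k)\<^sup>2 * (real c powr (1/2) / real c powr 2)"
    using False by (simp add: powr_half_sqrt powr_numeral)
  also have "\<dots> = (2 * real k)\<^sup>2 * real c powr (-3/2)"
    by (subst powr_diff [symmetric]) simp
  finally show ?thesis .
qed simp

lemma summable_estar_term:
  assumes "k > 0"
  shows "summable (estar_term k n)"
proof (rule summable_comparison_test')
  show "summable (\<lambda>c. (2 * real k)\<^sup>2 * real c powr (-3/2))"
    by (intro summable_mult) (simp add: summable_real_powr_iff)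
  show "norm (estar_term k n c) \<le> (2 * real k)\<^sup>2 * real c powr (-3/2)" for c
    using estar_term_le[OF assms] estar_term_nonneg by simp
qed

lemma estar_eq_suminf:
  assumes "k > 0"
  shows "estar k n = (\<Sum>c. estar_term k n c)"
proof -
  have "estar k n = (\<Sum>c. estar_term k n (Suc c))"
    by (simp only: estar_def estar_term_def)
  then show ?thesis
    using suminf_split_head[OF summable_estar_term[OF assms, of n]] by simp
qed

lemma estar_term_cong:
  assumes "\<And>q. q \<in> prime_factors c \<Longrightarrow> multiplicity q n = multiplicity q n'"
  shows "estar_term k n c = estar_term k n' c"
  unfolding estar_term_def using gamma_cong[OF assms] by simp

lemma estar_term_eq_0:
  assumes "prime p" "multiplicity p c \<noteq> 0" "gamma_pp p (multiplicity p c) n = 0"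
  shows "estar_term k n c = 0"
  unfolding estar_term_def using gamma_eq_0[OF assms] by simp

lemma estar_term_prime_power_mult:
  fixes p k c r :: nat
  assumes p: "prime p" and k: "\<not> p dvd k" and c: "\<not> p dvd c" and r: "r \<ge> 1"
  shows "estar_term k n (p ^ r * c) =
    (if p = 2 then 4 else 1) * gamma_pp p r n / real p ^ (2 * r) * estar_term k n c"
proof -
  have "c \<noteq> 0" using c by (metis dvd_0_right)
  then show ?thesis
    unfolding estar_term_def gcd_prime_power_mult[OF p c k r] gamma_prime_power_mult[OF p c r]
    by (auto simp: field_simps power_mult_distrib power_mult)
qed

lemma estar_term_prime_mult:
  fixes p k c :: nat
  assumes p: "prime p" and k: "\<not> p dvd k"
  shows "estar_term (p * k) n c =
    (if multiplicity p (2 * k) < multiplicity p c then (real p)\<^sup>2 else 1) * estar_term k n c"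
proof (cases "c = 0")
  case False
  have "k \<noteq> 0" using k by (auto intro!: gr0I)
  then have "gcd c (2 * (p * k)) = (if multiplicity p (2 * k) < multiplicity p c then p else 1) * gcd c (2 * k)"
    using gcd_prime_mult[OF p False, of "2 * k"] by (simp add: ac_simps)
  then show ?thesis by (simp add: estar_term_def power_mult_distrib)
qed simp

text \<open>
  Since multiplicity p 0 = 0, the term for c = 0 lands in the part r = 0; this is harmless
  because every series used here vanishes at 0.
\<close>

definition valuation_part :: "nat \<Rightarrow> nat \<Rightarrow> (nat \<Rightarrow> real) \<Rightarrow> real" where
  "valuation_part p r f = (\<Sum>c. if multiplicity p c = r then f c else 0)"

lemma summable_restrict_nonneg:
  fixes f :: "nat \<Rightarrow> real"
  assumes "summable f" "\<And>c. f c \<ge> 0"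
  shows "summable (\<lambda>c. if P c then f c else 0)"
  by (rule summable_comparison_test'[OF assms(1)]) (use assms(2) in auto)

lemma valuation_part_cong:
  assumes "\<And>c. c \<noteq> 0 \<Longrightarrow> multiplicity p c = r \<Longrightarrow> f c = g c" and "f 0 = g 0"
  shows "valuation_part p r f = valuation_part p r g"
proof -
  have "(if multiplicity p c = r then f c else 0) = (if multiplicity p c = r then g c else 0)" for c
    using assms by (cases "c = 0") auto
  then show ?thesis unfolding valuation_part_def by simp
qed

lemma valuation_part_cmult:
  assumes "summable f" "\<And>c. f c \<ge> 0"
  shows "valuation_part p r (\<lambda>c. a * f c) = a * valuation_part p r f"
proof -
  have "(\<lambda>c. if multiplicity p c = r then a * f c else 0) =
      (\<lambda>c. a * (if multiplicity p c = r then f c else 0))"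
    by auto
  then show ?thesis
    unfolding valuation_part_def
    using suminf_mult[OF summable_restrict_nonneg[OF assms, of "\<lambda>c. multiplicity p c = r"], of a]
    by simp
qed

lemma valuation_part_shift:
  fixes f :: "nat \<Rightarrow> real"
  assumes p: "prime p" and f: "summable f" "\<And>c. f c \<ge> 0" "f 0 = 0"
  shows "valuation_part p r f = valuation_part p 0 (\<lambda>c. f (p ^ r * c))"
proof -
  define g where "g c = (if multiplicity p c = r then f c else 0)" for c
  have mono: "strict_mono (\<lambda>c. p ^ r * c)"
    using p by (intro strict_monoI) (simp add: prime_gt_0_nat)
  have outside: "g c = 0" if "c \<notin> range (\<lambda>c. p ^ r * c)" for c
  proof (rule ccontr)
    assume "g c \<noteq> 0"
    then have "p ^ r dvd c" using multiplicity_dvd[of p c] unfolding g_def by (auto split: if_splits)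
    then show False using that by (metis dvdE rangeI)
  qed
  have "summable g"
    unfolding g_def by (rule summable_restrict_nonneg[OF f(1,2)])
  then have "(\<lambda>c. g (p ^ r * c)) sums suminf g"
    by (intro iffD2[OF sums_mono_reindex[of "\<lambda>c. p ^ r * c" g, OF mono outside]] summable_sums)
  moreover have "g (p ^ r * c) = (if multiplicity p c = 0 then f (p ^ r * c) else 0)" for c
    using p f(3) unfolding g_def
    by (cases "c = 0")
       (auto simp: prime_elem_multiplicity_mult_distrib multiplicity_same_power prime_gt_0_nat)
  ultimately show ?thesis
    unfolding valuation_part_def g_def by (simp add: sums_unique)
qed

lemma suminf_valuation_le:
  fixes f :: "nat \<Rightarrow> real"
  assumes "summable f" "\<And>c. f c \<ge> 0"
  shows "(\<Sum>c. if multiplicity p c \<le> R then f c else 0) = (\<Sum>r\<le>R. valuation_part p r f)"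
proof -
  have "(if multiplicity p c \<le> R then f c else 0) =
      (\<Sum>r\<le>R. if multiplicity p c = r then f c else 0)" for c
    by (simp add: sum.delta)
  then show ?thesis
    unfolding valuation_part_def
    by (simp add: suminf_sum [symmetric] summable_restrict_nonneg[OF assms])
qed

lemma suminf_eq_sum_valuation_parts:
  fixes f :: "nat \<Rightarrow> real"
  assumes "summable f" "\<And>c. f c \<ge> 0" and vanish: "\<And>c. R < multiplicity p c \<Longrightarrow> f c = 0"
  shows "(\<Sum>c. f c) = (\<Sum>r\<le>R. valuation_part p r f)"
proof -
  have "f c = (if multiplicity p c \<le> R then f c else 0)" for c
    using vanish[of c] by auto
  then show ?thesis
    using suminf_valuation_le[OF assms(1,2), of p R] by presburger
qed

lemma suminf_scaled_above_valuation:
  fixes f :: "nat \<Rightarrow> real"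
  assumes "summable f" "\<And>c. f c \<ge> 0"
  shows "(\<Sum>c. (if R < multiplicity p c then a else 1) * f c) =
    a * (\<Sum>c. f c) - (a - 1) * (\<Sum>r\<le>R. valuation_part p r f)"
proof -
  have s1: "summable (\<lambda>c. a * f c)"
    using assms(1) by (rule summable_mult)
  have s2: "summable (\<lambda>c. (a - 1) * (if multiplicity p c \<le> R then f c else 0))"
    by (rule summable_mult[OF summable_restrict_nonneg[OF assms]])
  have "(\<Sum>c. (if R < multiplicity p c then a else 1) * f c) =
      (\<Sum>c. a * f c - (a - 1) * (if multiplicity p c \<le> R then f c else 0))"
    by (intro arg_cong[where f = suminf] ext) (auto simp: algebra_simps)
  also have "\<dots> = (\<Sum>c. a * f c) - (\<Sum>c. (a - 1) * (if multiplicity p c \<le> R then f c else 0))"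
    by (rule suminf_diff[OF s1 s2, symmetric])
  also have "\<dots> = a * (\<Sum>c. f c) - (a - 1) * (\<Sum>c. if multiplicity p c \<le> R then f c else 0)"
    by (simp only: suminf_mult[OF assms(1)] suminf_mult[OF summable_restrict_nonneg[OF assms]])
  finally show ?thesis
    by (simp only: suminf_valuation_le[OF assms])
qed

lemma valuation_part_estar_term:
  fixes p k r :: nat
  assumes p: "prime p" and k: "k > 0" "\<not> p dvd k" and r: "r \<ge> 1"
  shows "valuation_part p r (estar_term k n) =
    (if p = 2 then 4 else 1) * gamma_pp p r n / real p ^ (2 * r) * valuation_part p 0 (estar_term k n)"
proof -
  have "valuation_part p r (estar_term k n) = valuation_part p 0 (\<lambda>c. estar_term k n (p ^ r * c))"
    by (rule valuation_part_shift[OF p summable_estar_term[OF k(1)] estar_term_nonneg]) simp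
  also have "\<dots> = valuation_part p 0
      (\<lambda>c. (if p = 2 then 4 else 1) * gamma_pp p r n / real p ^ (2 * r) * estar_term k n c)"
  proof (rule valuation_part_cong)
    fix c :: nat assume "c \<noteq> 0" "multiplicity p c = 0"
    then have "\<not> p dvd c" using p prime_multiplicity_gt_zero_iff[of p c] by auto
    then show "estar_term k n (p ^ r * c) =
        (if p = 2 then 4 else 1) * gamma_pp p r n / real p ^ (2 * r) * estar_term k n c"
      by (rule estar_term_prime_power_mult[OF p k(2) _ r])
  qed simp
  also have "\<dots> = (if p = 2 then 4 else 1) * gamma_pp p r n / real p ^ (2 * r) * valuation_part p 0 (estar_term k n)"
    by (rule valuation_part_cmult[OF summable_estar_term[OF k(1)] estar_term_nonneg])
  finally show ?thesis .
qed

lemma valuation_part_0_estar_term_cong: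
  fixes p :: nat
  assumes p: "prime p" and agree: "\<And>q. prime q \<Longrightarrow> q \<noteq> p \<Longrightarrow> multiplicity q n' = multiplicity q n"
  shows "valuation_part p 0 (estar_term k n') = valuation_part p 0 (estar_term k n)"
proof (rule valuation_part_cong)
  fix c :: nat assume "c \<noteq> 0" "multiplicity p c = 0"
  then have "q \<noteq> p" if "q \<in> prime_factors c" for q
    using that p by (auto simp: prime_factors_multiplicity)
  then show "estar_term k n' c = estar_term k n c"
    by (intro estar_term_cong) (auto intro: agree)
qed simp

lemma estar_prime_mult_eq_valuation_parts:
  fixes p k :: nat
  assumes p: "prime p" and k: "k > 0" "\<not> p dvd k"
  shows "estar (p * k) n = (real p)\<^sup>2 * estar k n
    - ((real p)\<^sup>2 - 1) * (\<Sum>r\<le>multiplicity p (2 * k). valuation_part p r (estar_term k n))"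
proof -
  have pk: "p * k > 0" using p k by (simp add: prime_gt_0_nat)
  have "estar (p * k) n = (\<Sum>c.
      (if multiplicity p (2 * k) < multiplicity p c then (real p)\<^sup>2 else 1) * estar_term k n c)"
    by (simp only: estar_eq_suminf[OF pk] estar_term_prime_mult[OF p k(2)])
  also have "\<dots> = (real p)\<^sup>2 * estar k n
      - ((real p)\<^sup>2 - 1) * (\<Sum>r\<le>multiplicity p (2 * k). valuation_part p r (estar_term k n))"
    by (simp only: suminf_scaled_above_valuation[OF summable_estar_term[OF k(1)] estar_term_nonneg]
          estar_eq_suminf[OF k(1)])
  finally show ?thesis .
qed

lemma estar_coprime_eq_valuation_parts:
  fixes p k n n' :: nat
  assumes p: "prime p" and k: "k > 0" "\<not> p dvd k" and n': "multiplicity p n' = 0"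
    and agree: "\<And>q. prime q \<Longrightarrow> q \<noteq> p \<Longrightarrow> multiplicity q n' = multiplicity q n"
  shows "estar k n' = valuation_part p 0 (estar_term k n)
    + (\<Sum>r\<in>{0<..Suc (multiplicity p (2 * k))}. valuation_part p r (estar_term k n'))"
proof -
  have "estar k n' = (\<Sum>r\<le>Suc (multiplicity p (2 * k)). valuation_part p r (estar_term k n'))"
    unfolding estar_eq_suminf[OF k(1)]
  proof (rule suminf_eq_sum_valuation_parts[OF summable_estar_term[OF k(1)] estar_term_nonneg])
    fix c assume "Suc (multiplicity p (2 * k)) < multiplicity p c"
    then show "estar_term k n' c = 0"
      by (intro estar_term_eq_0[OF p])
         (auto simp: multiplicity_prime_double[OF p k(2)] gamma_pp_multiplicity_0[OF n'])
  qed
  also have "\<dots> = valuation_part p 0 (estar_term k n') +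
      (\<Sum>r\<in>{0<..Suc (multiplicity p (2 * k))}. valuation_part p r (estar_term k n'))"
    by (simp only: atMost_atLeast0 sum.head[OF le0])
  also have "valuation_part p 0 (estar_term k n') = valuation_part p 0 (estar_term k n)"
    by (rule valuation_part_0_estar_term_cong[OF p agree])
  finally show ?thesis .
qed

lemma estar_prime_mult:
  fixes p k n n' :: nat
  assumes p: "prime p" and k: "k > 0" "\<not> p dvd k" and n': "multiplicity p n' = 0"
    and agree: "\<And>q. prime q \<Longrightarrow> q \<noteq> p \<Longrightarrow> multiplicity q n' = multiplicity q n"
  shows "estar (p * k) n = (real p)\<^sup>2 * estar k n
    - (real p)\<^sup>2 * ((real p ^ 2 - 1) / (real p ^ 2 + 1)) * estar k n'"
proof -
  define U where "U = valuation_part p 0 (estar_term k n)"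
  note e = multiplicity_prime_double[OF p k(2)]
  note estar_pk = estar_prime_mult_eq_valuation_parts[OF p k, of n]
  note estar_n' = estar_coprime_eq_valuation_parts[OF p k n' agree, folded U_def]
  have shift_n: "valuation_part p r (estar_term k n) =
      (if p = 2 then 4 else 1) * gamma_pp p r n / real p ^ (2 * r) * U" if "r \<ge> 1" for r
    unfolding U_def by (rule valuation_part_estar_term[OF p k that])
  have shift_n': "valuation_part p r (estar_term k n') =
      (if p = 2 then 4 else 1) * gamma_pp p r n' / real p ^ (2 * r) * U" if "r \<ge> 1" for r
    using valuation_part_estar_term[OF p k that, of n'] valuation_part_0_estar_term_cong[OF p agree, of k]
    by (simp add: U_def)
  show ?thesis
  proof (cases "p = 2")
    case True
    have "gamma_pp 2 1 n = 1" "gamma_pp 2 1 n' = 1" "gamma_pp 2 2 n' = 2"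
      using True n' by (simp_all add: gamma_pp_def)
    then have V: "valuation_part p 1 (estar_term k n) = U" "valuation_part p 1 (estar_term k n') = U"
      "valuation_part p 2 (estar_term k n') = U / 2"
      using shift_n[of 1] shift_n'[of 1] shift_n'[of 2] True by simp_all
    have "{0<..Suc (multiplicity p (2 * k))} = {1, 2}" "{..multiplicity p (2 * k)} = {0, 1}"
      using True e by auto
    then have "estar (p * k) n = (real p)\<^sup>2 * estar k n - ((real p)\<^sup>2 - 1) * (2 * U)"
      and "estar k n' = 5 / 2 * U"
      using estar_pk estar_n' by (simp_all add: V[unfolded One_nat_def] U_def[symmetric])
    then show ?thesis using True by simp
  next
    case False
    have "gamma_pp p 1 n' = 1" using n' by (simp add: gamma_pp_multiplicity_0)
    then have V: "valuation_part p 1 (estar_term k n') = U / (real p)\<^sup>2"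
      using shift_n'[of 1] False by simp
    have "{0<..Suc (multiplicity p (2 * k))} = {1}" "{..multiplicity p (2 * k)} = {0}"
      using False e by auto
    then have estar_pk': "estar (p * k) n = (real p)\<^sup>2 * estar k n - ((real p)\<^sup>2 - 1) * U"
      and estar_n'': "estar k n' = (1 + 1 / (real p)\<^sup>2) * U"
      using estar_pk estar_n' by (simp_all add: V[unfolded One_nat_def] U_def[symmetric] algebra_simps)
    have ratio: "(real p)\<^sup>2 * ((real p ^ 2 - 1) / (real p ^ 2 + 1)) * (1 + 1 / (real p)\<^sup>2) =
        (real p)\<^sup>2 - 1"
    proof -
      have "(real p)\<^sup>2 > 0" using p by (simp add: prime_gt_0_nat)
      moreover from this have "(real p)\<^sup>2 + 1 \<noteq> 0" by linarith
      moreover from calculation have "1 + 1 / (real p)\<^sup>2 = ((real p)\<^sup>2 + 1) / (real p)\<^sup>2"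
        by (simp add: field_simps)
      ultimately show ?thesis by simp
    qed
    have "(real p)\<^sup>2 * ((real p ^ 2 - 1) / (real p ^ 2 + 1)) * estar k n' = ((real p)\<^sup>2 - 1) * U"
      unfolding estar_n'' by (metis mult.assoc ratio)
    then show ?thesis using estar_pk' by linarith
  qed
qed

lemma prime_power_part_dvd:
  fixes d m :: nat
  shows "(\<Prod>p\<in>prime_factors m. p ^ multiplicity p d) dvd d"
proof (cases "d = 0")
  case False
  have "multiplicity q (\<Prod>p\<in>prime_factors m. p ^ multiplicity p d) \<le> multiplicity q d"
    if "prime q" for q
    using that by (subst multiplicity_prod_prime_powers) (auto simp: in_prime_factors_iff)
  then show ?thesis
    using False by (intro multiplicity_le_imp_dvd) (auto simp: in_prime_factors_iff)
qed simp

lemma dpart_pos: "d > 0 \<Longrightarrow> dpart d m > 0"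
  unfolding dpart_def using prime_power_part_dvd[of d m]
  by (metis dvd_div_eq_0_iff gr0I not_gr0)

lemma multiplicity_dpart:
  fixes d m q :: nat
  assumes d: "d > 0" and q: "prime q"
  shows "multiplicity q (dpart d m) = (if q \<in> prime_factors m then 0 else multiplicity q d)"
proof -
  define P where "P = (\<Prod>p\<in>prime_factors m. p ^ multiplicity p d)"
  have P: "P \<noteq> 0" unfolding P_def by (auto simp: in_prime_factors_iff)
  have "d = P * dpart d m"
    using prime_power_part_dvd[of d m] unfolding dpart_def P_def by simp
  then have "multiplicity q d = multiplicity q P + multiplicity q (dpart d m)"
    using dpart_pos[OF d] P q by (metis prime_elem_multiplicity_mult_distrib prime_imp_prime_elem neq0_conv)
  moreover have "multiplicity q P = (if q \<in> prime_factors m then multiplicity q d else 0)"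
    unfolding P_def by (rule multiplicity_prod_prime_powers) (auto simp: q in_prime_factors_iff)
  ultimately show ?thesis by auto
qed

lemma dpart_dpart:
  fixes d a b :: nat
  assumes "d > 0" "a > 0" "b > 0"
  shows "dpart (dpart d a) b = dpart d (a * b)"
  by (rule multiplicity_eq_nat)
     (use assms in \<open>auto simp: multiplicity_dpart dpart_pos prime_factors_product\<close>)

lemma multiplicity_dpart_prime:
  fixes d p q :: nat
  assumes "d > 0" "prime p" "prime q"
  shows "multiplicity q (dpart d p) = (if q = p then 0 else multiplicity q d)"
  using assms by (simp add: multiplicity_dpart prime_prime_factors)

lemma squarefree_induct_prime_mult [consumes 2, case_names one prime_mult]:
  fixes k :: nat
  assumes "squarefree k" "k > 0"
    and one: "P 1"
    and prime_mult: "\<And>p k. prime p \<Longrightarrow> \<not> p dvd k \<Longrightarrow> k > 0 \<Longrightarrow> squarefree k \<Longrightarrow> P k \<Longrightarrow> P (p * k)"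
  shows "P k"
  using assms(1,2)
proof (induction k rule: less_induct)
  case (less k)
  show ?case
  proof (cases "k = 1")
    case False
    then obtain p k' where p: "prime p" and k: "k = p * k'"
      using prime_factor_nat by (metis dvdE)
    have "k' > 0" using less.prems k by (auto intro!: gr0I)
    moreover have "\<not> p dvd k'"
    proof
      assume "p dvd k'"
      then have "p ^ 2 dvd k" using k by (auto simp: power2_eq_square)
      then show False using squarefreeD[OF less.prems(1)] p by (metis nat_dvd_1_iff_1 not_prime_1)
    qed
    moreover have "squarefree k'" using squarefree_multD(2) less.prems(1) k by blast
    moreover have "k' < k" using k \<open>k' > 0\<close> prime_ge_2_nat[OF p] by simp
    ultimately show ?thesis
      using prime_mult[OF p] less.IH k by blast
  qed (use one in simp)
qed

lemma sum_divisors_prime_mult: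
  fixes p k :: nat
  assumes p: "prime p" and k: "\<not> p dvd k"
  shows "(\<Sum>m | m dvd p * k. f m) = (\<Sum>m | m dvd k. f m) + (\<Sum>m | m dvd k. f (p * m))"
proof -
  have fin: "finite {m. m dvd k}" using k by (auto intro!: finite_divisors_nat gr0I)
  have divisors: "{m. m dvd p * k} = {m. m dvd k} \<union> (\<lambda>m. p * m) ` {m. m dvd k}"
  proof (intro set_eqI iffI)
    fix m assume "m \<in> {m. m dvd p * k}"
    then have m: "m dvd p * k" by simp
    show "m \<in> {m. m dvd k} \<union> (\<lambda>m. p * m) ` {m. m dvd k}"
    proof (cases "p dvd m")
      case True
      then show ?thesis using m p by (auto simp: prime_gt_0_nat elim!: dvdE)
    next
      case False
      then have "coprime m p" using p by (metis prime_imp_coprime coprime_commute)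
      then show ?thesis using m by (simp add: coprime_dvd_mult_right_iff)
    qed
  qed auto
  have "{m. m dvd k} \<inter> (\<lambda>m. p * m) ` {m. m dvd k} = {}"
    using k by (auto dest: dvd_mult_left)
  moreover have "inj_on (\<lambda>m. p * m) {m. m dvd k}"
    using p by (intro inj_onI) (simp add: prime_gt_0_nat)
  ultimately show ?thesis
    unfolding divisors using fin by (simp add: sum.union_disjoint sum.reindex)
qed

lemma moebius_prime_mult:
  fixes p m :: nat
  assumes p: "prime p" and m: "\<not> p dvd m"
  shows "moebius (p * m) = - moebius m"
proof -
  have m0: "m \<noteq> 0" using m by (metis dvd_0_right)
  have "coprime p m" using p m by (rule prime_imp_coprime)
  then have "squarefree (p * m) \<longleftrightarrow> squarefree m"
    using p squarefree_mult_coprime squarefree_multD(2) squarefree_prime by blast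
  moreover have "prime_factors (p * m) = insert p (prime_factors m)"
    using p m0 by (subst prime_factors_product) (auto simp: prime_prime_factors)
  moreover have "p \<notin> prime_factors m" using m by (auto simp: in_prime_factors_iff)
  moreover have "finite (prime_factors m)" by simp
  ultimately show ?thesis unfolding moebius_def by simp
qed

definition estar_divisor_sum :: "nat \<Rightarrow> nat \<Rightarrow> real" where
  "estar_divisor_sum k d = (\<Sum>m | m dvd k.
     real_of_int (moebius m) * (\<Prod>p\<in>prime_factors m. (real p ^ 2 - 1) / (real p ^ 2 + 1)) *
     estar 1 ((dpart d m)\<^sup>2))"

lemma estar_divisor_sum_1: "estar_divisor_sum 1 d = estar 1 (d\<^sup>2)"
  by (simp add: estar_divisor_sum_def moebius_def dpart_def)

lemma estar_divisor_sum_prime_mult: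
  fixes p k d :: nat
  assumes p: "prime p" and k: "\<not> p dvd k" and d: "d > 0"
  shows "estar_divisor_sum (p * k) d = estar_divisor_sum k d
    - (real p ^ 2 - 1) / (real p ^ 2 + 1) * estar_divisor_sum k (dpart d p)"
proof -
  define F where "F e m = real_of_int (moebius m) *
    (\<Prod>q\<in>prime_factors m. (real q ^ 2 - 1) / (real q ^ 2 + 1)) * estar 1 ((dpart e m)\<^sup>2)" for e m
  have sum_F: "estar_divisor_sum j e = (\<Sum>m | m dvd j. F e m)" for j e
    unfolding estar_divisor_sum_def F_def ..
  have F_prime_mult: "F d (p * m) = - ((real p ^ 2 - 1) / (real p ^ 2 + 1)) * F (dpart d p) m"
    if "m dvd k" for m
  proof -
    have m: "m > 0" "\<not> p dvd m" using that k by (auto intro!: gr0I dest: dvd_trans)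
    have "prime_factors (p * m) = insert p (prime_factors m)" "p \<notin> prime_factors m"
      using p m by (auto simp: prime_factors_product prime_prime_factors in_prime_factors_iff)
    then show ?thesis
      using m p d by (simp add: F_def moebius_prime_mult dpart_dpart prime_gt_0_nat)
  qed
  have "(\<Sum>m | m dvd k. F d (p * m)) = (\<Sum>m | m dvd k. - ((real p ^ 2 - 1) / (real p ^ 2 + 1)) * F (dpart d p) m)"
    by (rule sum.cong) (simp_all add: F_prime_mult)
  then show ?thesis
    unfolding sum_F sum_divisors_prime_mult[OF p k] by (simp add: sum_distrib_left sum_negf)
qed

lemma estar_square_prime_mult:
  fixes p k d :: nat
  assumes p: "prime p" and k: "k > 0" "\<not> p dvd k" and d: "d > 0"
  shows "estar (p * k) (d\<^sup>2) = (real p)\<^sup>2 * estar k (d\<^sup>2)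
    - (real p)\<^sup>2 * ((real p ^ 2 - 1) / (real p ^ 2 + 1)) * estar k ((dpart d p)\<^sup>2)"
proof (rule estar_prime_mult[OF p k])
  have d': "dpart d p > 0" using d by (rule dpart_pos)
  then show "multiplicity p ((dpart d p)\<^sup>2) = 0"
    using p d by (simp add: prime_elem_multiplicity_power_distrib multiplicity_dpart_prime)
  show "multiplicity q ((dpart d p)\<^sup>2) = multiplicity q (d\<^sup>2)" if "prime q" "q \<noteq> p" for q
    using that p d d' by (simp add: prime_elem_multiplicity_power_distrib multiplicity_dpart_prime)
qed

theorem lemma5p3:
  fixes k d :: nat
  assumes "k > 0" and "squarefree k" and "d > 0"
  shows "estar k (d\<^sup>2) =
    (real k)\<^sup>2 * (\<Sum>m | m dvd k.
       real_of_int (moebius m) *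
       (\<Prod>p\<in>prime_factors m. (real p ^ 2 - 1) / (real p ^ 2 + 1)) *
       estar 1 ((dpart d m)\<^sup>2))"
proof -
  have "estar k (d\<^sup>2) = (real k)\<^sup>2 * estar_divisor_sum k d"
    using assms(2,1,3)
  proof (induction k arbitrary: d rule: squarefree_induct_prime_mult)
    case one
    show ?case using estar_divisor_sum_1[of d] by simp
  next
    case (prime_mult p k)
    have "dpart d p > 0" using prime_mult.prems by (rule dpart_pos)
    then show ?case
      unfolding estar_square_prime_mult[OF prime_mult.hyps(1,3,2) prime_mult.prems]
        estar_divisor_sum_prime_mult[OF prime_mult.hyps(1,2) prime_mult.prems]
        prime_mult.IH[OF prime_mult.prems] prime_mult.IH[OF \<open>dpart d p > 0\<close>]
      by (simp add: power_mult_distrib algebra_simps)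
  qed
  then show ?thesis unfolding estar_divisor_sum_def .
qed

end
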